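(* Let $a,b,c,d>0$, $\theta>0$ satisfy $-(\theta a+\theta^2 b)<(\theta-1)(\theta+1)^2<\theta c+\theta^2 d$, and consider on $\mathcal{I}=[0,1]^2$ the system $$\dot x=x(1-x)\big[xr(-c+d-a+b)+x(a-b)-r(d+b)+b\big]+\mu(1-2x),\qquad \dot r=r(1-r)\big[\theta x-(1-x)\big].$$ Then for every $\mu\in(0,1]$, all equilibria of the system lying on the boundary $\partial\mathcal{I}$ of the square are unstable. *)

theory Defs
  imports "HOL-Analysis.Analysis"
begin

definition sysF :: "real \<Rightarrow> real \<Rightarrow> real \<Rightarrow> real \<Rightarrow> real \<Rightarrow> real \<Rightarrow> real \<times> real \<Rightarrow> real \<times> real" where
  "sysF a b c d \<theta> \<mu> = (\<lambda>(x, r).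
     (x * (1 - x) * (x * r * (- c + d - a + b) + x * (a - b) - r * (d + b) + b) + \<mu> * (1 - 2 * x),
      r * (1 - r) * (\<theta> * x - (1 - x))))"

definition unit_square :: "(real \<times> real) set" where
  "unit_square = {0..1} \<times> {0..1}"

definition is_fwd_solution :: "('a::real_normed_vector \<Rightarrow> 'a) \<Rightarrow> 'a set \<Rightarrow> (real \<Rightarrow> 'a) \<Rightarrow> bool" where
  "is_fwd_solution F S u \<longleftrightarrow>
     (\<forall>t\<ge>0. u t \<in> S \<and> (u has_vector_derivative F (u t)) (at t within {0..}))"

definition is_equilibrium :: "('a::real_normed_vector \<Rightarrow> 'a) \<Rightarrow> 'a set \<Rightarrow> 'a \<Rightarrow> bool" where
  "is_equilibrium F S p \<longleftrightarrow> p \<in> S \<and> F p = 0"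

definition lyapunov_stable :: "('a::real_normed_vector \<Rightarrow> 'a) \<Rightarrow> 'a set \<Rightarrow> 'a \<Rightarrow> bool" where
  "lyapunov_stable F S p \<longleftrightarrow>
     (\<forall>\<epsilon>>0. \<exists>\<delta>>0. \<forall>u. is_fwd_solution F S u \<and> dist (u 0) p < \<delta> \<longrightarrow>
        (\<forall>t\<ge>0. dist (u t) p < \<epsilon>))"

definition unstable :: "('a::real_normed_vector \<Rightarrow> 'a) \<Rightarrow> 'a set \<Rightarrow> 'a \<Rightarrow> bool" where
  "unstable F S p \<longleftrightarrow> \<not> lyapunov_stable F S p"

end

theory Submission
  imports Defs
begin

text \<open>Since \<mu> > 0, the x-equation does not vanish on the edges x = 0 and x = 1, so a boundary
  equilibrium (x, r) has 0 < x < 1 and r \<in> {0, 1}. On the edge r = 0 the x-equation reduces to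
  x (1 - x) (x a + (1 - x) b) + \<mu> (1 - 2 x), and the hypothesis on \<theta>, a, b makes this positive
  whenever \<theta> x \<le> 1 - x; hence an equilibrium there has \<theta> x > 1 - x, i.e. the r-equation
  r' = r (1 - r) (\<theta> x - (1 - x)) is repelling from r = 0 near it, and solutions starting slightly
  above the edge grow like exp (c t) until they leave a fixed neighbourhood. The edge r = 1 is the
  mirror image under x \<mapsto> 1 - x, \<theta> \<mapsto> 1/\<theta>, (a, b) \<mapsto> (d, c). The required solutions exist
  for all time: clamped to the square, the vector field is globally Lipschitz and bounded, and it
  points into the square outside it.\<close>

section \<open>Global solutions of bounded Lipschitz equations\<close>

lemma integral_has_vector_derivative_atLeast:
  fixes f :: "real \<Rightarrow> 'a::banach"
  assumes "continuous_on UNIV f" "t \<ge> 0"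
  shows "((\<lambda>\<tau>. integral {0..\<tau>} f) has_vector_derivative f t) (at t within {0..})"
proof -
  have "((\<lambda>\<tau>. integral {0..\<tau>} f) has_vector_derivative f t) (at t within {0..t+1})"
    by (rule integral_has_vector_derivative) (use assms in \<open>auto intro: continuous_on_subset\<close>)
  moreover have "at t within {0..t+1} = at t within {0..}"
    by (rule at_within_nhd[of t "{..<t+1}"]) auto
  ultimately show ?thesis by simp
qed

text \<open>Picard iteration for u' = G u, u 0 = q, in the rescaled unknown v t = exp (-k t) u t: fixed
  points v give solutions u t = exp (k t) v t of u t = q + integral over [0, t] of G o u, and the
  weight makes the operator a contraction on bounded continuous functions. Using max 0 t extends
  the image constantly to t < 0, as bounded continuous functions live on the whole real line.\<close>
definition weighted_picard :: "('a::banach \<Rightarrow> 'a) \<Rightarrow> real \<Rightarrow> 'a \<Rightarrow> (real \<Rightarrow>\<^sub>C 'a) \<Rightarrow> real \<Rightarrow> 'a" where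
  "weighted_picard G k q v t =
     exp (- k * max 0 t) *\<^sub>R (q + integral {0..max 0 t} (\<lambda>s. G (exp (k * s) *\<^sub>R v s)))"

lemma continuous_on_weighted_field:
  fixes G :: "'a::banach \<Rightarrow> 'a"
  assumes "continuous_on UNIV G"
  shows "continuous_on UNIV (\<lambda>s. G (exp (k * s) *\<^sub>R apply_bcontfun v s))"
  by (rule continuous_on_compose2[OF assms]) (auto intro!: continuous_intros)

lemma exp_neg_mult_le_inverse:
  fixes k m :: real
  assumes "k > 0" "m \<ge> 0"
  shows "exp (- k * m) * m \<le> 1 / k"
proof -
  have "k * m < exp (k * m)" using exp_ge_add_one_self[of "k * m"] by linarith
  then show ?thesis using assms by (simp add: exp_minus field_simps)
qed

lemma weighted_picard_bcontfun:
  fixes G :: "'a::banach \<Rightarrow> 'a"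
  assumes cont: "continuous_on UNIV G" and bound: "\<And>x. norm (G x) \<le> M" and k: "k > 0"
  shows "weighted_picard G k q v \<in> bcontfun"
proof -
  define g where "g = (\<lambda>s. G (exp (k * s) *\<^sub>R v s))"
  have g: "continuous_on UNIV g"
    unfolding g_def by (rule continuous_on_weighted_field[OF cont])
  have M: "M \<ge> 0" using bound[of 0] norm_ge_zero[of "G 0"] by linarith
  have "continuous_on {0..} (\<lambda>\<tau>. integral {0..\<tau>} g)"
    by (rule continuous_on_vector_derivative) (auto intro: integral_has_vector_derivative_atLeast[OF g])
  then have "continuous_on UNIV (\<lambda>t. integral {0..max 0 t} g)"
    by (rule continuous_on_compose2) (auto intro!: continuous_intros)
  then have "continuous_on UNIV (weighted_picard G k q v)"
    unfolding weighted_picard_def g_def[symmetric] by (intro continuous_intros)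
  moreover have "norm (weighted_picard G k q v t) \<le> norm q + M / k" for t
  proof -
    define m where "m = max 0 t"
    have m: "m \<ge> 0" by (simp add: m_def)
    have "g integrable_on {0..m}"
      by (rule integrable_continuous_real, rule continuous_on_subset[OF g]) auto
    then have "norm (integral {0..m} g) \<le> integral {0..m} (\<lambda>_. M)"
      by (intro integral_norm_bound_integral) (auto simp: g_def bound)
    then have int: "norm (integral {0..m} g) \<le> M * m" using m by (simp add: mult.commute)
    have "norm (weighted_picard G k q v t) = exp (- k * m) * norm (q + integral {0..m} g)"
      by (simp add: weighted_picard_def m_def g_def)
    also have "\<dots> \<le> exp (- k * m) * (norm q + M * m)"
      using norm_triangle_ineq[of q "integral {0..m} g"] int
      by (intro mult_left_mono) auto
    also have "\<dots> = exp (- k * m) * norm q + M * (exp (- k * m) * m)"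
      by (simp add: algebra_simps)
    also have "\<dots> \<le> norm q + M / k"
      using exp_neg_mult_le_inverse[OF k m] M k m
      by (intro add_mono) (auto simp: mult_left_le_one_le divide_inverse mult_left_mono)
    finally show ?thesis .
  qed
  then have "bounded (range (weighted_picard G k q v))" by (auto simp: bounded_iff)
  ultimately show ?thesis by (simp add: bcontfun_def)
qed

lemma exp_weighted_integral_norm_le:
  fixes f :: "real \<Rightarrow> 'a::banach"
  assumes "f integrable_on {0..m}" "\<And>s. norm (f s) \<le> C * exp (k * s)" "C \<ge> 0" "k > 0" "m \<ge> 0"
  shows "exp (- k * m) * norm (integral {0..m} f) \<le> C / k"
proof -
  have "((\<lambda>s. C * exp (k * s)) has_integral
          (\<lambda>s. C * exp (k * s) / k) m - (\<lambda>s. C * exp (k * s) / k) 0) {0..m}"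
    using assms by (intro fundamental_theorem_of_calculus)
      (auto intro!: derivative_eq_intros simp: has_real_derivative_iff_has_vector_derivative[symmetric])
  then have weight: "((\<lambda>s. C * exp (k * s)) has_integral (C * exp (k * m) / k - C / k)) {0..m}"
    by simp
  have "norm (integral {0..m} f) \<le> integral {0..m} (\<lambda>s. C * exp (k * s))"
    using assms(1,2) weight by (intro integral_norm_bound_integral) (auto intro: has_integral_integrable)
  also have "\<dots> = C * exp (k * m) / k - C / k"
    using weight by (rule integral_unique)
  finally have "norm (integral {0..m} f) \<le> C * exp (k * m) / k - C / k" .
  then have "exp (- k * m) * norm (integral {0..m} f) \<le> exp (- k * m) * (C * exp (k * m) / k - C / k)"
    by (intro mult_left_mono) auto
  also have "\<dots> = C / k - exp (- k * m) * (C / k)"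
    by (simp add: exp_minus field_simps)
  also have "\<dots> \<le> C / k" using assms by simp
  finally show ?thesis .
qed

lemma weighted_picard_contraction:
  fixes G :: "'a::banach \<Rightarrow> 'a"
  assumes lip: "L-lipschitz_on UNIV G" and k: "k > 0" "2 * L \<le> k"
  shows "dist (weighted_picard G k q v t) (weighted_picard G k q w t) \<le> 1/2 * dist v w"
proof -
  define m where "m = max 0 t"
  define D where "D = dist v w"
  have L: "L \<ge> 0" using lipschitz_on_nonneg[OF lip] .
  have cont: "continuous_on UNIV G" using lip by (rule lipschitz_on_continuous_on)
  define g where "g = (\<lambda>u s. G (exp (k * s) *\<^sub>R apply_bcontfun u s))"
  have int: "g u integrable_on {0..m}" for u
    unfolding g_def
    by (rule integrable_continuous_real, rule continuous_on_subset[OF continuous_on_weighted_field[OF cont]]) auto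
  have g_diff: "norm (g v s - g w s) \<le> L * D * exp (k * s)" for s
  proof -
    have "norm (g v s - g w s) \<le> L * dist (exp (k * s) *\<^sub>R v s) (exp (k * s) *\<^sub>R w s)"
      unfolding g_def dist_norm[symmetric] by (rule lipschitz_onD[OF lip]) auto
    also have "\<dots> = L * (exp (k * s) * dist (v s) (w s))"
      by (simp add: dist_norm flip: scaleR_diff_right)
    also have "\<dots> \<le> L * (exp (k * s) * D)"
      unfolding D_def by (intro mult_left_mono dist_bounded L) auto
    finally show ?thesis by (simp add: algebra_simps)
  qed
  have "dist (weighted_picard G k q v t) (weighted_picard G k q w t)
        = exp (- k * m) * norm (integral {0..m} (\<lambda>s. g v s - g w s))"
    using int by (simp add: weighted_picard_def m_def g_def dist_norm integral_diff flip: scaleR_diff_right)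
  also have "\<dots> \<le> L * D / k"
    using int g_diff L k by (intro exp_weighted_integral_norm_le integrable_diff) (auto simp: D_def m_def)
  also have "\<dots> = L / k * D" by simp
  also have "\<dots> \<le> 1/2 * D"
    using k by (intro mult_right_mono) (auto simp: D_def divide_le_eq)
  finally show ?thesis by (simp add: D_def)
qed

theorem lipschitz_bounded_ode_solution_exists:
  fixes G :: "'a::banach \<Rightarrow> 'a"
  assumes lip: "L-lipschitz_on UNIV G" and bounded: "bounded (range G)"
  shows "\<exists>u. u 0 = q \<and> (\<forall>t\<ge>0. (u has_vector_derivative G (u t)) (at t within {0..}))"
proof -
  define k where "k = 2 * L + 1"
  have k: "k > 0" "2 * L \<le> k" using lipschitz_on_nonneg[OF lip] by (auto simp: k_def)
  have cont: "continuous_on UNIV G" using lip by (rule lipschitz_on_continuous_on)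
  obtain M where M: "\<And>x. norm (G x) \<le> M" using bounded by (auto simp: bounded_iff)
  define \<Phi> where "\<Phi> v = Bcontfun (weighted_picard G k q v)" for v
  have \<Phi>: "apply_bcontfun (\<Phi> v) = weighted_picard G k q v" for v
    using weighted_picard_bcontfun[OF cont M k(1)] by (simp add: \<Phi>_def Bcontfun_inverse)
  have "dist (\<Phi> v) (\<Phi> w) \<le> 1/2 * dist v w" for v w
    by (rule dist_bound, unfold \<Phi>, rule weighted_picard_contraction[OF lip k])
  then obtain v where v: "\<Phi> v = v"
    using banach_fix_type[of "1/2" \<Phi>] by auto
  define g where "g = (\<lambda>s. G (exp (k * s) *\<^sub>R apply_bcontfun v s))"
  define u where "u t = exp (k * t) *\<^sub>R apply_bcontfun v t" for t
  have u: "u t = q + integral {0..t} g" if "t \<ge> 0" for t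
    using that fun_cong[OF \<Phi>[of v, unfolded v], of t]
    by (simp add: u_def weighted_picard_def g_def exp_minus)
  have "(u has_vector_derivative G (u t)) (at t within {0..})" if "t \<ge> 0" for t
  proof -
    have "((\<lambda>t. q + integral {0..t} g) has_vector_derivative g t) (at t within {0..})"
      using integral_has_vector_derivative_atLeast[OF _ that] continuous_on_weighted_field[OF cont]
      by (auto intro!: derivative_eq_intros simp: g_def)
    then have "(u has_vector_derivative g t) (at t within {0..})"
      by (rule has_vector_derivative_transform[rotated 2]) (use that u in auto)
    then show ?thesis by (simp add: g_def u_def)
  qed
  moreover have "u 0 = q" by (simp add: u)
  ultimately show ?thesis by blast
qed

section \<open>Scalar differential inequalities and instability\<close>

lemma nonneg_if_deriv_nonneg_where_neg:
  fixes y y' :: "real \<Rightarrow> real"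
  assumes cont: "continuous_on {0..} y"
    and der: "\<And>t. t > 0 \<Longrightarrow> (y has_real_derivative y' t) (at t)"
    and sign: "\<And>t. t > 0 \<Longrightarrow> y t < 0 \<Longrightarrow> y' t \<ge> 0"
    and y0: "y 0 \<ge> 0" and t: "t \<ge> 0"
  shows "y t \<ge> 0"
proof (rule ccontr)
  assume neg: "\<not> y t \<ge> 0"
  define S where "S = {0..t} \<inter> y -` {0..}"
  have "closed S" unfolding S_def
    by (rule continuous_closed_preimage) (auto intro: continuous_on_subset[OF cont])
  moreover have "0 \<in> S" "bdd_above S" using y0 t by (auto simp: S_def bdd_above_def)
  ultimately have sS: "Sup S \<in> S" using closed_contains_Sup by blast
  define s where "s = Sup S"
  have after: "y z < 0" if "s < z" "z \<le> t" for z
    using that cSup_upper[of z S] \<open>bdd_above S\<close> sS by (force simp: S_def s_def)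
  have s: "0 \<le> s" "s < t" using sS neg by (auto simp: S_def s_def less_eq_real_def)
  have "continuous_on {s..t} y" using s by (intro continuous_on_subset[OF cont]) auto
  moreover have "y differentiable (at z)" if "s < z" "z < t" for z
    using der[of z] that s by (auto simp: real_differentiable_def)
  ultimately obtain l z where z: "s < z" "z < t" "(y has_real_derivative l) (at z)" "y t - y s = (t - s) * l"
    using MVT[OF s(2)] by blast
  have "l = y' z" using z der[of z] s DERIV_unique by auto
  then have "l \<ge> 0" using sign[of z] after[of z] z s by auto
  then have "y s \<le> y t" using z(4) s(2) by (smt (verit) mult_nonneg_nonneg)
  then show False using sS neg by (auto simp: S_def s_def)
qed

lemma exp_growth_lower_bound:
  fixes y y' :: "real \<Rightarrow> real"
  assumes cont: "continuous_on {0..} y"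
    and der: "\<And>t. t > 0 \<Longrightarrow> (y has_real_derivative y' t) (at t)"
    and grow: "\<And>t. t > 0 \<Longrightarrow> c * y t \<le> y' t" and t: "t \<ge> 0"
  shows "y 0 * exp (c * t) \<le> y t"
proof -
  have "0 \<le> y t * exp (- c * t) - y 0"
  proof (rule nonneg_if_deriv_nonneg_where_neg[OF _ _ _ _ t])
    show "continuous_on {0..} (\<lambda>t. y t * exp (- c * t) - y 0)"
      by (intro continuous_intros cont)
    show "((\<lambda>t. y t * exp (- c * t) - y 0) has_real_derivative (y' s - c * y s) * exp (- c * s)) (at s)"
      if "s > 0" for s
      using der[OF that] by (auto intro!: derivative_eq_intros simp: algebra_simps)
    show "0 \<le> (y' s - c * y s) * exp (- c * s)" if "s > 0" for s
      using grow[OF that] by simp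
  qed simp
  then show ?thesis by (simp add: exp_minus field_simps)
qed

lemma exp_growth_exceeds:
  fixes y y' :: "real \<Rightarrow> real"
  assumes cont: "continuous_on {0..} y"
    and der: "\<And>t. t > 0 \<Longrightarrow> (y has_real_derivative y' t) (at t)"
    and grow: "\<And>t. t > 0 \<Longrightarrow> c * y t \<le> y' t" and c: "c > 0" and y0: "y 0 > 0"
  shows "\<exists>t\<ge>0. B < y t"
proof -
  define t where "t = max 0 B / (c * y 0)"
  have t: "t \<ge> 0" using c y0 by (simp add: t_def)
  have "y 0 + max 0 B = y 0 * (1 + c * t)" using c y0 by (simp add: t_def field_simps)
  also have "\<dots> \<le> y 0 * exp (c * t)"
    using y0 exp_ge_add_one_self[of "c * t"] by (intro mult_left_mono) simp_all
  also have "\<dots> \<le> y t" using exp_growth_lower_bound[OF cont der grow t] .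
  finally show ?thesis using t y0 by (intro exI[of _ t]) auto
qed

lemma has_vector_derivative_at_of_atLeast:
  "(u has_vector_derivative D) (at t within {0..}) \<Longrightarrow> t > 0 \<Longrightarrow> (u has_vector_derivative D) (at t)"
  by (subst (asm) at_within_interior) auto

lemma has_real_derivative_bounded_linear_comp:
  fixes \<phi> :: "'a::real_normed_vector \<Rightarrow> real"
  assumes "bounded_linear \<phi>" "(u has_vector_derivative D) (at t)"
  shows "((\<lambda>t. \<phi> (u t)) has_real_derivative \<phi> D) (at t)"
  using bounded_linear.has_vector_derivative[OF assms]
  by (simp add: has_real_derivative_iff_has_vector_derivative)

lemma linear_functional_along_solution:
  fixes \<phi> :: "'a::real_normed_vector \<Rightarrow> real"
  assumes u: "\<And>t. t \<ge> 0 \<Longrightarrow> (u has_vector_derivative G (u t)) (at t within {0..})"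
    and \<phi>: "bounded_linear \<phi>"
  shows "continuous_on {0..} (\<lambda>t. \<phi> (u t) + \<kappa>)"
    and "\<And>t. t > 0 \<Longrightarrow> ((\<lambda>t. \<phi> (u t) + \<kappa>) has_real_derivative \<phi> (G (u t))) (at t)"
proof -
  have "continuous_on {0..} u"
    using u by (intro continuous_on_vector_derivative) auto
  then show "continuous_on {0..} (\<lambda>t. \<phi> (u t) + \<kappa>)"
    by (intro continuous_intros bounded_linear.continuous_on[OF \<phi>])
  show "((\<lambda>t. \<phi> (u t) + \<kappa>) has_real_derivative \<phi> (G (u t))) (at t)" if "t > 0" for t
    using has_real_derivative_bounded_linear_comp[OF \<phi> has_vector_derivative_at_of_atLeast[OF u]] that
    by (auto intro!: derivative_eq_intros)
qed

lemma halfspace_forward_invariant: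
  fixes \<phi> :: "'a::real_normed_vector \<Rightarrow> real"
  assumes u: "\<And>t. t \<ge> 0 \<Longrightarrow> (u has_vector_derivative G (u t)) (at t within {0..})"
    and \<phi>: "bounded_linear \<phi>"
    and inward: "\<And>z. \<phi> z + \<kappa> < 0 \<Longrightarrow> 0 \<le> \<phi> (G z)"
    and "0 \<le> \<phi> (u 0) + \<kappa>" "t \<ge> 0"
  shows "0 \<le> \<phi> (u t) + \<kappa>"
  using linear_functional_along_solution[OF u \<phi>] inward assms(4,5)
  by (rule nonneg_if_deriv_nonneg_where_neg)

lemma unstable_if_expanding_functional:
  fixes F :: "'a::real_normed_vector \<Rightarrow> 'a" and \<phi> :: "'a \<Rightarrow> real"
  assumes \<phi>: "bounded_linear \<phi>"
    and solvable: "\<And>q. q \<in> S \<Longrightarrow> \<exists>u. u 0 = q \<and> is_fwd_solution F S u"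
    and approach: "\<And>\<delta>. \<delta> > 0 \<Longrightarrow> \<exists>q\<in>S. dist q p < \<delta> \<and> \<phi> p < \<phi> q"
    and c: "c > 0"
    and expand: "\<forall>\<^sub>F z in nhds p. z \<in> S \<longrightarrow> c * (\<phi> z - \<phi> p) \<le> \<phi> (F z)"
  shows "unstable F S p"
  unfolding unstable_def lyapunov_stable_def
proof
  assume stable: "\<forall>\<epsilon>>0. \<exists>\<delta>>0. \<forall>u. is_fwd_solution F S u \<and> dist (u 0) p < \<delta> \<longrightarrow> (\<forall>t\<ge>0. dist (u t) p < \<epsilon>)"
  obtain \<epsilon> where \<epsilon>: "\<epsilon> > 0" and near: "\<And>z. z \<in> S \<Longrightarrow> dist z p < \<epsilon> \<Longrightarrow> c * (\<phi> z - \<phi> p) \<le> \<phi> (F z)"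
    using expand unfolding eventually_nhds_metric by (metis dist_commute)
  obtain \<delta> where "\<delta> > 0" and \<delta>: "\<And>u. is_fwd_solution F S u \<Longrightarrow> dist (u 0) p < \<delta> \<Longrightarrow> \<forall>t\<ge>0. dist (u t) p < \<epsilon>"
    using stable \<epsilon> by blast
  obtain q where "q \<in> S" "dist q p < \<delta>" "\<phi> p < \<phi> q" using approach[OF \<open>\<delta> > 0\<close>] by blast
  then obtain u where u0: "u 0 = q" and u: "is_fwd_solution F S u" using solvable by blast
  have close: "dist (u t) p < \<epsilon>" if "t \<ge> 0" for t using \<delta>[OF u] u0 \<open>dist q p < \<delta>\<close> that by simp
  obtain K where K: "K > 0" "\<And>x. norm (\<phi> x) \<le> norm x * K"
    using bounded_linear.pos_bounded[OF \<phi>] by blast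
  define y where "y = (\<lambda>t. \<phi> (u t) - \<phi> p)"
  have y_le: "y t < K * \<epsilon>" if "t \<ge> 0" for t
  proof -
    have "y t = \<phi> (u t - p)" by (simp add: y_def linear_diff[OF bounded_linear.linear[OF \<phi>]])
    also have "\<dots> \<le> norm (u t - p) * K" using K(2)[of "u t - p"] by simp
    also have "\<dots> < \<epsilon> * K" using close[OF that] K(1) by (simp add: dist_norm)
    finally show ?thesis by (simp add: mult.commute)
  qed
  have "\<exists>t\<ge>0. K * \<epsilon> < y t"
  proof (rule exp_growth_exceeds[OF _ _ _ c])
    have "(u has_vector_derivative F (u t)) (at t within {0..})" if "t \<ge> 0" for t
      using u that by (simp add: is_fwd_solution_def)
    moreover have "y = (\<lambda>t. \<phi> (u t) + - \<phi> p)" by (simp add: y_def)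
    ultimately show "continuous_on {0..} y" "\<And>s. s > 0 \<Longrightarrow> (y has_real_derivative \<phi> (F (u s))) (at s)"
      using linear_functional_along_solution[OF _ \<phi>] by metis+
    show "c * y s \<le> \<phi> (F (u s))" if "s > 0" for s
    proof -
      have "u s \<in> S" using u that by (simp add: is_fwd_solution_def)
      then show ?thesis using near close[of s] that by (simp add: y_def)
    qed
    show "y 0 > 0" using u0 \<open>\<phi> p < \<phi> q\<close> by (simp add: y_def)
  qed
  then show False using y_le by force
qed

section \<open>Existence of solutions in the unit square\<close>

definition bounded_lipschitz :: "('a::metric_space \<Rightarrow> real) \<Rightarrow> bool" where
  "bounded_lipschitz f \<longleftrightarrow> (\<exists>L. L-lipschitz_on UNIV f) \<and> bounded (range f)"

lemma bounded_lipschitz_abs_bound: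
  assumes "bounded_lipschitz f"
  obtains B where "B \<ge> 0" "\<And>x. \<bar>f x\<bar> \<le> B"
  using assms unfolding bounded_lipschitz_def bounded_iff
  by (metis abs_ge_zero order_trans range_eqI real_norm_def)

lemma bounded_lipschitz_const: "bounded_lipschitz (\<lambda>_. k)"
  unfolding bounded_lipschitz_def by (auto intro: lipschitz_on_constant)

lemma bounded_lipschitz_add:
  assumes "bounded_lipschitz f" "bounded_lipschitz g"
  shows "bounded_lipschitz (\<lambda>x. f x + g x)"
  using assms unfolding bounded_lipschitz_def
  by (auto intro: lipschitz_on_add bounded_plus_comp)

lemma bounded_lipschitz_diff:
  assumes "bounded_lipschitz f" "bounded_lipschitz g"
  shows "bounded_lipschitz (\<lambda>x. f x - g x)"
  using assms unfolding bounded_lipschitz_def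
  by (auto intro: lipschitz_on_diff bounded_minus_comp)

lemma bounded_lipschitz_mult:
  assumes f: "bounded_lipschitz f" and g: "bounded_lipschitz g"
  shows "bounded_lipschitz (\<lambda>x. f x * g x)"
proof -
  obtain L1 L2 where L: "L1-lipschitz_on UNIV f" "L2-lipschitz_on UNIV g"
    using f g by (auto simp: bounded_lipschitz_def)
  obtain B1 B2 where B: "B1 \<ge> 0" "\<And>x. \<bar>f x\<bar> \<le> B1" "B2 \<ge> 0" "\<And>x. \<bar>g x\<bar> \<le> B2"
    using bounded_lipschitz_abs_bound[OF f] bounded_lipschitz_abs_bound[OF g] by metis
  have "(B1 * L2 + B2 * L1)-lipschitz_on UNIV (\<lambda>x. f x * g x)"
  proof (rule lipschitz_onI)
    fix x y
    have "f x * g x - f y * g y = f x * (g x - g y) + g y * (f x - f y)" by (simp add: algebra_simps)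
    then have "dist (f x * g x) (f y * g y) \<le> \<bar>f x\<bar> * dist (g x) (g y) + \<bar>g y\<bar> * dist (f x) (f y)"
      by (simp add: dist_real_def abs_mult[symmetric] abs_triangle_ineq)
    also have "\<dots> \<le> B1 * (L2 * dist x y) + B2 * (L1 * dist x y)"
      using B L by (intro add_mono mult_mono) (auto intro: lipschitz_onD)
    finally show "dist (f x * g x) (f y * g y) \<le> (B1 * L2 + B2 * L1) * dist x y"
      by (simp add: algebra_simps)
    show "0 \<le> B1 * L2 + B2 * L1" using B lipschitz_on_nonneg[OF L(1)] lipschitz_on_nonneg[OF L(2)] by simp
  qed
  moreover have "bounded (range (\<lambda>x. f x * g x))"
    using B unfolding bounded_iff by (auto simp: abs_mult intro!: exI[of _ "B1 * B2"] mult_mono)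
  ultimately show ?thesis unfolding bounded_lipschitz_def by blast
qed

definition clamp01 :: "real \<Rightarrow> real" where
  "clamp01 x = min 1 (max 0 x)"

definition square_clamp :: "real \<times> real \<Rightarrow> real \<times> real" where
  "square_clamp z = (clamp01 (fst z), clamp01 (snd z))"

lemma square_clamp_id: "z \<in> unit_square \<Longrightarrow> square_clamp z = z"
  by (auto simp: square_clamp_def clamp01_def unit_square_def)

lemma bounded_lipschitz_clamp01:
  assumes "L-lipschitz_on UNIV f"
  shows "bounded_lipschitz (\<lambda>x. clamp01 (f x))"
proof -
  have "1-lipschitz_on (f ` UNIV) clamp01"
    by (rule lipschitz_onI) (auto simp: clamp01_def dist_real_def)
  then have "(1 * L)-lipschitz_on UNIV (\<lambda>x. clamp01 (f x))"
    using assms by (rule lipschitz_on_compose2[rotated])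
  moreover have "bounded (range (\<lambda>x. clamp01 (f x)))"
    unfolding bounded_iff by (auto simp: clamp01_def intro!: exI[of _ 1])
  ultimately show ?thesis unfolding bounded_lipschitz_def by blast
qed

lemma sysF_square_clamp_lipschitz_bounded:
  obtains L where "L-lipschitz_on UNIV (\<lambda>z. sysF a b c d \<theta> \<mu> (square_clamp z))"
    and "bounded (range (\<lambda>z. sysF a b c d \<theta> \<mu> (square_clamp z)))"
proof -
  define G where "G z = sysF a b c d \<theta> \<mu> (square_clamp z)" for z
  have X: "bounded_lipschitz (\<lambda>z::real \<times> real. clamp01 (fst z))"
    and R: "bounded_lipschitz (\<lambda>z::real \<times> real. clamp01 (snd z))"
    using dist_fst_le dist_snd_le by (auto intro!: bounded_lipschitz_clamp01[of 1] lipschitz_onI)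
  note rules = bounded_lipschitz_add bounded_lipschitz_diff bounded_lipschitz_mult bounded_lipschitz_const X R
  have "bounded_lipschitz (\<lambda>z. fst (G z))"
    unfolding G_def sysF_def square_clamp_def by (simp, intro rules)
  moreover have "bounded_lipschitz (\<lambda>z. snd (G z))"
    unfolding G_def sysF_def square_clamp_def by (simp, intro rules)
  ultimately obtain L1 L2 where "L1-lipschitz_on UNIV (\<lambda>z. fst (G z))" "L2-lipschitz_on UNIV (\<lambda>z. snd (G z))"
    and bounded: "bounded (range (\<lambda>z. fst (G z)))" "bounded (range (\<lambda>z. snd (G z)))"
    unfolding bounded_lipschitz_def by blast
  then have "(sqrt (L1\<^sup>2 + L2\<^sup>2))-lipschitz_on UNIV G"
    using lipschitz_on_Pair by fastforce
  moreover have "range G \<subseteq> range (\<lambda>z. fst (G z)) \<times> range (\<lambda>z. snd (G z))"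
    by (auto simp: mem_Times_iff) (metis fst_conv rangeI, metis snd_conv rangeI)
  then have "bounded (range G)" using bounded_Times[OF bounded] by (rule bounded_subset[rotated])
  ultimately show ?thesis using that unfolding G_def by blast
qed

text \<open>Outside the square the clamped field points back into it (its x-component is \<mu> or -\<mu>,
  its r-component vanishes), so its solutions starting in the square stay there and solve the
  original system.\<close>
lemma sysF_fwd_solution_exists:
  assumes \<mu>: "\<mu> \<ge> 0" and q: "q \<in> unit_square"
  shows "\<exists>u. u 0 = q \<and> is_fwd_solution (sysF a b c d \<theta> \<mu>) unit_square u"
proof -
  define G where "G z = sysF a b c d \<theta> \<mu> (square_clamp z)" for z
  obtain L where "L-lipschitz_on UNIV G" "bounded (range G)"
    unfolding G_def by (rule sysF_square_clamp_lipschitz_bounded)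
  then obtain u where u0: "u 0 = q"
    and u: "\<And>t. t \<ge> 0 \<Longrightarrow> (u has_vector_derivative G (u t)) (at t within {0..})"
    using lipschitz_bounded_ode_solution_exists by blast
  have invariant: "0 \<le> \<phi> (u t) + \<kappa>"
    if "t \<ge> 0" "bounded_linear \<phi>" "\<And>z. \<phi> z + \<kappa> < 0 \<Longrightarrow> 0 \<le> \<phi> (G z)" "0 \<le> \<phi> q + \<kappa>"
    for \<phi> :: "real \<times> real \<Rightarrow> real" and \<kappa> t
    using halfspace_forward_invariant[OF u that(2,3)] that(1,4) u0 by simp
  have q01: "0 \<le> fst q" "fst q \<le> 1" "0 \<le> snd q" "snd q \<le> 1"
    using q by (auto simp: unit_square_def mem_Times_iff)
  have "u t \<in> unit_square" if "t \<ge> 0" for t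
  proof -
    have "0 \<le> fst (u t) + 0"
      by (rule invariant[OF that bounded_linear_fst])
        (use \<mu> q01 in \<open>auto simp: G_def sysF_def square_clamp_def clamp01_def\<close>)
    moreover have "0 \<le> - fst (u t) + 1"
      by (rule invariant[OF that bounded_linear_minus[OF bounded_linear_fst]])
        (use \<mu> q01 in \<open>auto simp: G_def sysF_def square_clamp_def clamp01_def\<close>)
    moreover have "0 \<le> snd (u t) + 0"
      by (rule invariant[OF that bounded_linear_snd])
        (use q01 in \<open>auto simp: G_def sysF_def square_clamp_def clamp01_def\<close>)
    moreover have "0 \<le> - snd (u t) + 1"
      by (rule invariant[OF that bounded_linear_minus[OF bounded_linear_snd]])
        (use q01 in \<open>auto simp: G_def sysF_def square_clamp_def clamp01_def\<close>)
    ultimately show ?thesis by (auto simp: unit_square_def mem_Times_iff)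
  qed
  moreover from this have "G (u t) = sysF a b c d \<theta> \<mu> (u t)" if "t \<ge> 0" for t
    using that by (simp add: G_def square_clamp_id)
  ultimately have "is_fwd_solution (sysF a b c d \<theta> \<mu>) unit_square u"
    using u by (simp add: is_fwd_solution_def)
  with u0 show ?thesis by blast
qed

section \<open>Equilibria on the boundary\<close>

text \<open>The function (t a + t^2 b - (1 - t) (1 + t)^2) / t = a + t b - 1/t - 1 + t + t^2
  is increasing on t > 0, so its positivity propagates upwards from t = \<theta>.\<close>
lemma cubic_inequality_upward_closed:
  fixes a b \<theta> t :: real
  assumes "a > 0" "b > 0" "0 < \<theta>" "\<theta> \<le> t"
    and "(1 - \<theta>) * (1 + \<theta>)\<^sup>2 < \<theta> * a + \<theta>\<^sup>2 * b"
  shows "(1 - t) * (1 + t)\<^sup>2 < t * a + t\<^sup>2 * b"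
proof -
  have "t * ((1 - \<theta>) * (1 + \<theta>)\<^sup>2) < t * (\<theta> * a + \<theta>\<^sup>2 * b)"
    using assms by (intro mult_strict_left_mono) auto
  also have "\<dots> \<le> \<theta> * (t * a + t\<^sup>2 * b)"
    using assms by (simp add: power2_eq_square algebra_simps mult_right_mono)
  finally have "t * ((1 - \<theta>) * (1 + \<theta>)\<^sup>2) < \<theta> * (t * a + t\<^sup>2 * b)" .
  moreover have "t * ((1 - \<theta>) * (1 + \<theta>)\<^sup>2) - \<theta> * ((1 - t) * (1 + t)\<^sup>2)
      = (t - \<theta>) * (1 + \<theta> * t + \<theta> * t * (t + \<theta>))"
    by (simp add: power2_eq_square algebra_simps)
  moreover have "0 \<le> (t - \<theta>) * (1 + \<theta> * t + \<theta> * t * (t + \<theta>))"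
    using assms by (intro mult_nonneg_nonneg) auto
  ultimately have "\<theta> * ((1 - t) * (1 + t)\<^sup>2) < \<theta> * (t * a + t\<^sup>2 * b)" by linarith
  then show ?thesis using assms(3) by simp
qed

lemma bottom_edge_drift_pos:
  fixes a b \<theta> \<mu> x :: real
  assumes "a > 0" "b > 0" "\<theta> > 0" "(1 - \<theta>) * (1 + \<theta>)\<^sup>2 < \<theta> * a + \<theta>\<^sup>2 * b"
    and "0 \<le> \<mu>" "\<mu> \<le> 1" "0 < x" "x < 1" "\<theta> * x \<le> 1 - x"
  shows "0 < x * (1 - x) * (x * a + (1 - x) * b) + \<mu> * (1 - 2 * x)"
proof (cases "2 * x \<le> 1")
  case True
  have "0 < x * (1 - x) * (x * a + (1 - x) * b)"
    using assms by (intro mult_pos_pos add_pos_nonneg) auto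
  moreover have "0 \<le> \<mu> * (1 - 2 * x)" using assms True by simp
  ultimately show ?thesis by linarith
next
  case False
  define t where "t = (1 - x) / x"
  have x: "1 - x = t * x" "x * (1 + t) = 1" using assms by (simp_all add: t_def field_simps)
  have t: "\<theta> \<le> t" using assms by (simp add: t_def field_simps)
  have "x * (1 - x) * (x * a + (1 - x) * b) = x ^ 3 * (t * a + t\<^sup>2 * b)"
    by (simp add: x(1) power2_eq_square power3_eq_cube algebra_simps)
  moreover have "2 * x - 1 = x ^ 3 * ((1 - t) * (1 + t)\<^sup>2)"
  proof -
    have "x ^ 3 * ((1 - t) * (1 + t)\<^sup>2) = x * (1 - t) * (x * (1 + t))\<^sup>2"
      by (simp add: power2_eq_square power3_eq_cube algebra_simps)
    then show ?thesis using x by (simp add: algebra_simps)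
  qed
  moreover have "x ^ 3 * ((1 - t) * (1 + t)\<^sup>2) < x ^ 3 * (t * a + t\<^sup>2 * b)"
    using cubic_inequality_upward_closed[OF assms(1-3) t assms(4)] assms by simp
  moreover have "1 - 2 * x \<le> \<mu> * (1 - 2 * x)"
    using False assms mult_right_mono_neg[of \<mu> 1 "1 - 2 * x"] by simp
  ultimately show ?thesis by linarith
qed

text \<open>The reflection x \<mapsto> 1 - x, \<theta> \<mapsto> 1/\<theta>, (a, b) \<mapsto> (d, c) turns the edge r = 1 into the edge r = 0.\<close>
lemma top_edge_drift_neg:
  fixes c d \<theta> \<mu> x :: real
  assumes "c > 0" "d > 0" "\<theta> > 0" "(\<theta> - 1) * (\<theta> + 1)\<^sup>2 < \<theta> * c + \<theta>\<^sup>2 * d"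
    and "0 \<le> \<mu>" "\<mu> \<le> 1" "0 < x" "x < 1" "1 - x \<le> \<theta> * x"
  shows "\<mu> * (1 - 2 * x) < x * (1 - x) * (x * c + (1 - x) * d)"
proof -
  have "(1 - 1/\<theta>) * (1 + 1/\<theta>)\<^sup>2 = ((\<theta> - 1) * (\<theta> + 1)\<^sup>2) / \<theta> ^ 3"
    using assms(3) by (simp add: field_simps power2_eq_square power3_eq_cube)
  also have "\<dots> < (\<theta> * c + \<theta>\<^sup>2 * d) / \<theta> ^ 3"
    using assms(3,4) by (simp add: divide_strict_right_mono)
  also have "\<dots> = 1/\<theta> * d + (1/\<theta>)\<^sup>2 * c"
    using assms(3) by (simp add: field_simps power2_eq_square power3_eq_cube)
  finally have "(1 - 1/\<theta>) * (1 + 1/\<theta>)\<^sup>2 < 1/\<theta> * d + (1/\<theta>)\<^sup>2 * c" .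
  moreover have "1/\<theta> * (1 - x) \<le> 1 - (1 - x)"
    using assms by (simp add: field_simps)
  ultimately have "0 < (1 - x) * (1 - (1 - x)) * ((1 - x) * d + (1 - (1 - x)) * c) + \<mu> * (1 - 2 * (1 - x))"
    using assms bottom_edge_drift_pos[of d c "1/\<theta>" \<mu> "1 - x"] by auto
  then show ?thesis by (simp add: algebra_simps)
qed

lemma frontier_unit_square: "frontier unit_square = unit_square - {0<..<1} \<times> {0<..<1}"
proof -
  have "closed unit_square" by (simp add: unit_square_def closed_Times)
  then show ?thesis by (simp add: frontier_def unit_square_def interior_Times)
qed

lemma eventually_nhds_gt_of_continuous:
  fixes f :: "'a::t2_space \<Rightarrow> real"
  assumes "isCont f p" "v < f p"
  shows "\<forall>\<^sub>F z in nhds p. v < f z"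
  using assms tendsto_at_iff_tendsto_nhds isCont_def order_tendstoD(1) by metis

lemma sysF_unstable_bottom_edge:
  assumes "\<mu> \<ge> 0" "0 \<le> x" "x \<le> 1" "1 - x < \<theta> * x"
  shows "unstable (sysF a b c d \<theta> \<mu>) unit_square (x, 0)"
proof (rule unstable_if_expanding_functional[OF bounded_linear_snd])
  define h where "h = \<theta> * x - (1 - x)"
  show "\<exists>u. u 0 = q \<and> is_fwd_solution (sysF a b c d \<theta> \<mu>) unit_square u" if "q \<in> unit_square" for q
    using sysF_fwd_solution_exists[OF assms(1) that] .
  show "\<exists>q\<in>unit_square. dist q (x, 0) < \<delta> \<and> snd (x, 0) < snd q" if "\<delta> > 0" for \<delta>
    using that assms by (intro bexI[of _ "(x, min (\<delta>/2) 1)"]) (auto simp: unit_square_def dist_Pair_Pair)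
  show "h / 2 > 0" using assms by (simp add: h_def)
  have "\<forall>\<^sub>F z in nhds (x, 0). h / 2 < (1 - snd z) * (\<theta> * fst z - (1 - fst z))"
    using assms by (intro eventually_nhds_gt_of_continuous continuous_intros) (simp add: h_def)
  then show "\<forall>\<^sub>F z in nhds (x, 0). z \<in> unit_square \<longrightarrow>
      h / 2 * (snd z - snd (x, 0)) \<le> snd (sysF a b c d \<theta> \<mu> z)"
  proof (rule eventually_mono, intro impI)
    fix z :: "real \<times> real"
    assume "h / 2 < (1 - snd z) * (\<theta> * fst z - (1 - fst z))" "z \<in> unit_square"
    moreover have "0 \<le> snd z" using \<open>z \<in> unit_square\<close> by (auto simp: unit_square_def mem_Times_iff)
    ultimately have "snd z * (h / 2) \<le> snd z * ((1 - snd z) * (\<theta> * fst z - (1 - fst z)))"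
      by (intro mult_left_mono) auto
    then show "h / 2 * (snd z - snd (x, 0)) \<le> snd (sysF a b c d \<theta> \<mu> z)"
      by (cases z) (simp add: sysF_def algebra_simps)
  qed
qed

lemma sysF_unstable_top_edge:
  assumes "\<mu> \<ge> 0" "0 \<le> x" "x \<le> 1" "\<theta> * x < 1 - x"
  shows "unstable (sysF a b c d \<theta> \<mu>) unit_square (x, 1)"
proof (rule unstable_if_expanding_functional[OF bounded_linear_minus[OF bounded_linear_snd]])
  define h where "h = (1 - x) - \<theta> * x"
  show "\<exists>u. u 0 = q \<and> is_fwd_solution (sysF a b c d \<theta> \<mu>) unit_square u" if "q \<in> unit_square" for q
    using sysF_fwd_solution_exists[OF assms(1) that] .
  show "\<exists>q\<in>unit_square. dist q (x, 1) < \<delta> \<and> - snd (x, 1) < - snd q" if "\<delta> > 0" for \<delta>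
    using that assms by (intro bexI[of _ "(x, 1 - min (\<delta>/2) 1)"]) (auto simp: unit_square_def dist_Pair_Pair)
  show "h / 2 > 0" using assms by (simp add: h_def)
  have "\<forall>\<^sub>F z in nhds (x, 1). h / 2 < snd z * ((1 - fst z) - \<theta> * fst z)"
    using assms by (intro eventually_nhds_gt_of_continuous continuous_intros) (simp add: h_def)
  then show "\<forall>\<^sub>F z in nhds (x, 1). z \<in> unit_square \<longrightarrow>
      h / 2 * (- snd z - - snd (x, 1)) \<le> - snd (sysF a b c d \<theta> \<mu> z)"
  proof (rule eventually_mono, intro impI)
    fix z :: "real \<times> real"
    assume "h / 2 < snd z * ((1 - fst z) - \<theta> * fst z)" "z \<in> unit_square"
    moreover have "0 \<le> 1 - snd z" using \<open>z \<in> unit_square\<close> by (auto simp: unit_square_def mem_Times_iff)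
    ultimately have "(1 - snd z) * (h / 2) \<le> (1 - snd z) * (snd z * ((1 - fst z) - \<theta> * fst z))"
      by (intro mult_left_mono) auto
    then show "h / 2 * (- snd z - - snd (x, 1)) \<le> - snd (sysF a b c d \<theta> \<mu> z)"
      by (cases z) (simp add: sysF_def algebra_simps)
  qed
qed

lemma sysF_frontier_equilibrium_cases:
  assumes "a > 0" "b > 0" "c > 0" "d > 0" "\<theta> > 0"
    and "- (\<theta> * a + \<theta>^2 * b) < (\<theta> - 1) * (\<theta> + 1)^2"
    and "(\<theta> - 1) * (\<theta> + 1)^2 < \<theta> * c + \<theta>^2 * d"
    and "0 < \<mu>" "\<mu> \<le> 1"
    and p: "p \<in> frontier unit_square" "is_equilibrium (sysF a b c d \<theta> \<mu>) unit_square p"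
  obtains x where "p = (x, 0)" "0 \<le> x" "x \<le> 1" "1 - x < \<theta> * x"
    | x where "p = (x, 1)" "0 \<le> x" "x \<le> 1" "\<theta> * x < 1 - x"
proof -
  obtain x r where xr: "p = (x, r)" by fastforce
  have eq: "x * (1 - x) * (x * r * (- c + d - a + b) + x * (a - b) - r * (d + b) + b) + \<mu> * (1 - 2 * x) = 0"
    using p(2) xr by (simp add: is_equilibrium_def sysF_def zero_prod_def)
  have "x \<noteq> 0" "x \<noteq> 1" using eq assms by auto
  moreover have "x \<in> {0..1}" "r \<in> {0..1}" "\<not> (x \<in> {0<..<1} \<and> r \<in> {0<..<1})"
    using p(1) xr unfolding frontier_unit_square by (auto simp: unit_square_def)
  ultimately have x: "0 < x" "x < 1" and "r = 0 \<or> r = 1" by auto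
  have H0: "(1 - \<theta>) * (1 + \<theta>)\<^sup>2 < \<theta> * a + \<theta>\<^sup>2 * b"
    using assms(6) by (simp add: algebra_simps)
  show ?thesis
  proof (cases "r = 0")
    case True
    have "x * (1 - x) * (x * a + (1 - x) * b) + \<mu> * (1 - 2 * x) = 0"
      using eq True by (simp add: algebra_simps)
    then have "\<not> \<theta> * x \<le> 1 - x"
      using bottom_edge_drift_pos[OF assms(1,2,5) H0 _ assms(9) x] assms(8) by fastforce
    then show ?thesis using that(1)[of x] xr True x by simp
  next
    case False
    with \<open>r = 0 \<or> r = 1\<close> have "r = 1" by simp
    have "\<mu> * (1 - 2 * x) = x * (1 - x) * (x * c + (1 - x) * d)"
      using eq \<open>r = 1\<close> by (simp add: algebra_simps)
    then have "\<not> 1 - x \<le> \<theta> * x"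
      using top_edge_drift_neg[OF assms(3,4,5,7) _ assms(9) x] assms(8) by fastforce
    then show ?thesis using that(2)[of x] xr \<open>r = 1\<close> x by simp
  qed
qed

theorem lemma12:
  fixes a b c d \<theta> \<mu> :: real
  assumes "a > 0" "b > 0" "c > 0" "d > 0" "\<theta> > 0"
    and "- (\<theta> * a + \<theta>^2 * b) < (\<theta> - 1) * (\<theta> + 1)^2"
    and "(\<theta> - 1) * (\<theta> + 1)^2 < \<theta> * c + \<theta>^2 * d"
    and "0 < \<mu>" "\<mu> \<le> 1"
  shows "\<forall>p. p \<in> frontier unit_square \<and> is_equilibrium (sysF a b c d \<theta> \<mu>) unit_square p
           \<longrightarrow> unstable (sysF a b c d \<theta> \<mu>) unit_square p"
proof (intro allI impI, elim conjE)
  fix p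
  assume "p \<in> frontier unit_square" "is_equilibrium (sysF a b c d \<theta> \<mu>) unit_square p"
  then show "unstable (sysF a b c d \<theta> \<mu>) unit_square p"
    using assms(8)
    by (cases rule: sysF_frontier_equilibrium_cases[OF assms])
      (auto intro: sysF_unstable_bottom_edge sysF_unstable_top_edge)
qed

end
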